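(* In the type $\mathbb A$ setting described in the context, for all $0\le i\le m-2$, $1\le k\le m-1-i$ and $0\le j\le i$ we have $$\mu_{(\mathbf x[i],B[i])}(x_k[i])=\frac{x_{k-1}[i]+x_{k+1}[i]}{x_k[i]}=\frac{x_{k-1+j}[i-j]+x_{k+1+j}[i-j]}{x_{k+j}[i-j]},$$ where $\mu_{(\mathbf y,C)}(y_k)$ denotes the $k$th entry of the first component of $\mu_k(\mathbf y,C)$.
   Context: Let $K$ be a field of characteristic $0$ or $K=\mathbb Z$, let $n\ge1$, $m=n+1$, $p=n$, and $\mathcal F=K(X_1,\dots,X_m)$. Let $B=(b_{ij})\in M_{m,n}(\mathbb Z)$ have $b_{i,i+1}=-1$ for $1\le i\le n-1$, $b_{i+1,i}=1$ for $1\le i\le n$, and all other entries $0$ (so the last row is $(0,\dots,0,1)$). Let $\mathbf x=(x_1,\dots,x_m)$ be algebraically independent over $K$ in $\mathcal F$. For $1\le k\le n$ the mutation $\mu_k(\mathbf y,C)=(\mathbf y',C')$ of a pair $(\mathbf y,C)$ is given by $c'_{ij}=-c_{ij}$ if $i=k$ or $j=k$, and $c'_{ij}=c_{ij}+\frac{|c_{ik}|c_{kj}+c_{ik}|c_{kj}|}{2}$ otherwise; $y'_s=y_s$ for $s\neq k$ and $y'_k=y_k^{-1}\big(\prod_{c_{ik}>0}y_i^{c_{ik}}+\prod_{c_{ik}<0}y_i^{-c_{ik}}\big)$. Set $(\mathbf x[0],B[0])=(\mathbf x,B)$ and, for $1\le i\le m-1$, $(\mathbf x[i],B[i])=\mu_{m-i}\cdots\mu_2\mu_1(\mathbf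 x[i-1],B[i-1])$ (apply $\mu_1$ first). Write $\mathbf x[i]=(x_1[i],\dots,x_m[i])$ and use the conventions $x_0[i]=1$, $x_{-1}[i]=0$ for all $i$. *)

theory Defs
  imports Main
begin

definition is_subfield :: "'a::field set \<Rightarrow> bool" where
  "is_subfield K \<longleftrightarrow> 0 \<in> K \<and> 1 \<in> K \<and>
     (\<forall>a\<in>K. \<forall>b\<in>K. a + b \<in> K \<and> a - b \<in> K \<and> a * b \<in> K) \<and>
     (\<forall>a\<in>K. inverse a \<in> K)"

text \<open>A polynomial is a finite set S of exponent
  vectors (supported in {1..m}) together with coefficients c.\<close>
definition alg_indep :: "'a::field set \<Rightarrow> nat \<Rightarrow> (nat \<Rightarrow> 'a) \<Rightarrow> bool" where
  "alg_indep K m x \<longleftrightarrow>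
     (\<forall>S c. finite S \<longrightarrow> (\<forall>\<alpha>\<in>S. \<forall>i. i \<notin> {1..m} \<longrightarrow> \<alpha> i = 0) \<longrightarrow>
        (\<forall>\<alpha>\<in>S. c \<alpha> \<in> K) \<longrightarrow>
        (\<Sum>\<alpha>\<in>S. c \<alpha> * (\<Prod>i\<in>{1..m}. x i ^ \<alpha> i)) = 0 \<longrightarrow>
        (\<forall>\<alpha>\<in>S. c \<alpha> = 0))"

type_synonym 'a seed = "(nat \<Rightarrow> 'a) \<times> (nat \<Rightarrow> nat \<Rightarrow> int)"

text \<open>Matrix mutation in direction k (entries indexed from 1).\<close>
definition mut_mat :: "nat \<Rightarrow> (nat \<Rightarrow> nat \<Rightarrow> int) \<Rightarrow> (nat \<Rightarrow> nat \<Rightarrow> int)" where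
  "mut_mat k C = (\<lambda>i j. if i = k \<or> j = k then - C i j
      else C i j + (\<bar>C i k\<bar> * C k j + C i k * \<bar>C k j\<bar>) div 2)"

text \<open>Seed mutation in direction k; m is the number of rows (cluster + frozen variables).\<close>
definition mut :: "nat \<Rightarrow> nat \<Rightarrow> 'a::field seed \<Rightarrow> 'a seed" where
  "mut m k s = (let y = fst s; C = snd s in
     (y(k := inverse (y k) *
        ((\<Prod>i\<in>{1..m}. if C i k > 0 then y i ^ nat (C i k) else 1) +
         (\<Prod>i\<in>{1..m}. if C i k < 0 then y i ^ nat (- C i k) else 1))),
      mut_mat k C))"

text \<open>The type A exchange matrix B (m = n+1 rows, n columns).\<close>
definition Bmat :: "nat \<Rightarrow> nat \<Rightarrow> nat \<Rightarrow> int" where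
  "Bmat n = (\<lambda>i j. if 1 \<le> i \<and> i \<le> n + 1 \<and> 1 \<le> j \<and> j \<le> n then
      (if i \<le> n - 1 \<and> j = i + 1 then -1 else if i = j + 1 then 1 else 0) else 0)"

text \<open>(x[i],B[i]): x[i] = mu_{m-i} ... mu_2 mu_1 (x[i-1],B[i-1]), mu_1 applied first.\<close>
fun seed_seq :: "nat \<Rightarrow> (nat \<Rightarrow> 'a::field) \<Rightarrow> nat \<Rightarrow> 'a seed" where
  "seed_seq n x 0 = (x, Bmat n)"
| "seed_seq n x (Suc i) = fold (mut (n + 1)) [1..<n + 1 - i] (seed_seq n x i)"

text \<open>x_k[i], with the convention x_0[i] = 1.\<close>
definition xv :: "nat \<Rightarrow> (nat \<Rightarrow> 'a::field) \<Rightarrow> nat \<Rightarrow> nat \<Rightarrow> 'a" where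
  "xv n x i k = (if k = 0 then 1 else fst (seed_seq n x i) k)"

end

theory Submission
  imports Defs
begin

text \<open>All seeds along the way have tridiagonal exchange matrices, so every mutation is an
  exchange relation with at most two neighbours.  Tracking the signs through one sweep
  \<open>\<mu>\<^sub>1, ..., \<mu>\<^sub>p\<close> gives the recurrence
  \<open>x\<^sub>q[i+1] x\<^sub>q[i] = x\<^sub>q\<^sub>-\<^sub>1[i+1] x\<^sub>q\<^sub>+\<^sub>1[i] + 1\<close>, while in \<open>B[i]\<close> the first \<open>n - i\<close> signs agree, so
  mutating \<open>x[i]\<close> at \<open>k\<close> yields \<open>(x\<^sub>k\<^sub>-\<^sub>1[i] + x\<^sub>k\<^sub>+\<^sub>1[i]) / x\<^sub>k[i]\<close>.  Two consecutive instances of the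
  recurrence show that this ratio is unchanged under \<open>(i, k) \<mapsto> (i - 1, k + 1)\<close>.
  Division is legitimate because every cluster variable is a subtraction-free rational
  expression in \<open>x\<close>, and such an expression cannot vanish: a polynomial with positive
  integer coefficients is nonzero at algebraically independent arguments.\<close>

lemma sum_list_map_eq_sum_count_of_nat:
  "sum_list (map (f::'b \<Rightarrow> 'a::comm_semiring_1) xs) = (\<Sum>a\<in>set xs. of_nat (count_list xs a) * f a)"
proof (induction xs)
  case (Cons x xs)
  have "(\<Sum>a\<in>set (x # xs). of_nat (count_list (x # xs) a) * f a)
      = (\<Sum>a\<in>insert x (set xs). of_nat (count_list xs a) * f a + (if x = a then f a else 0))"
    by (intro sum.cong) (auto simp: algebra_simps)
  also have "\<dots> = f x + sum_list (map f xs)"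
    using Cons.IH by (simp add: sum.distrib count_list_0_iff sum.insert_if add.commute)
  finally show ?case by simp
qed simp

definition monomial_value :: "nat \<Rightarrow> (nat \<Rightarrow> 'a::comm_semiring_1) \<Rightarrow> (nat \<Rightarrow> nat) \<Rightarrow> 'a" where
  "monomial_value m x \<alpha> = (\<Prod>i\<in>{1..m}. x i ^ \<alpha> i)"

lemma monomial_value_add: 
  "monomial_value m x (\<lambda>i. \<alpha> i + \<beta> i) = monomial_value m x \<alpha> * monomial_value m x \<beta>"
  unfolding monomial_value_def by (simp add: power_add prod.distrib)

text \<open>A nonempty list of exponent vectors, repetitions counting as multiplicities, encodes a
  nonzero polynomial with nonnegative integer coefficients.\<close>
definition positive_poly_value :: "nat \<Rightarrow> (nat \<Rightarrow> 'a::comm_semiring_1) \<Rightarrow> 'a \<Rightarrow> bool" where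
  "positive_poly_value m x v \<longleftrightarrow> (\<exists>L. L \<noteq> [] \<and> (\<forall>\<alpha>\<in>set L. \<forall>i. i \<notin> {1..m} \<longrightarrow> \<alpha> i = 0)
     \<and> v = (\<Sum>\<alpha>\<leftarrow>L. monomial_value m x \<alpha>))"

lemma positive_poly_value_one: "positive_poly_value m x 1"
  unfolding positive_poly_value_def monomial_value_def by (intro exI[of _ "[\<lambda>_. 0]"]) simp

lemma positive_poly_value_var:
  assumes "i \<in> {1..m}" shows "positive_poly_value m x (x i)"
proof -
  have "monomial_value m x (\<lambda>j. if j = i then 1 else 0) = x i"
    using assms unfolding monomial_value_def by (simp add: if_distrib prod.delta cong: if_cong)
  then show ?thesis
    using assms unfolding positive_poly_value_def by (intro exI[of _ "[\<lambda>j. if j = i then 1 else 0]"]) auto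
qed

lemma positive_poly_value_add:
  assumes "positive_poly_value m x u" "positive_poly_value m x v"
  shows "positive_poly_value m x (u + v)"
proof -
  obtain L L' where "L \<noteq> []" "\<forall>\<alpha>\<in>set L. \<forall>i. i \<notin> {1..m} \<longrightarrow> \<alpha> i = 0"
    "u = (\<Sum>\<alpha>\<leftarrow>L. monomial_value m x \<alpha>)" "\<forall>\<alpha>\<in>set L'. \<forall>i. i \<notin> {1..m} \<longrightarrow> \<alpha> i = 0" "v = (\<Sum>\<alpha>\<leftarrow>L'. monomial_value m x \<alpha>)"
    using assms unfolding positive_poly_value_def by metis
  then show ?thesis
    unfolding positive_poly_value_def by (intro exI[of _ "L @ L'"]) (simp only: set_append ball_Un, simp)
qed

lemma positive_poly_value_mult:
  assumes "positive_poly_value m x u" "positive_poly_value m x v"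
  shows "positive_poly_value m x (u * v)"
proof -
  obtain L L' where
      L: "L \<noteq> []" "\<forall>\<alpha>\<in>set L. \<forall>i. i \<notin> {1..m} \<longrightarrow> \<alpha> i = 0" "u = (\<Sum>\<alpha>\<leftarrow>L. monomial_value m x \<alpha>)"
    and L': "L' \<noteq> []" "\<forall>\<alpha>\<in>set L'. \<forall>i. i \<notin> {1..m} \<longrightarrow> \<alpha> i = 0"
      "v = (\<Sum>\<alpha>\<leftarrow>L'. monomial_value m x \<alpha>)"
    using assms unfolding positive_poly_value_def by blast
  define M where "M = [\<lambda>i. \<alpha> i + \<beta> i. \<alpha> \<leftarrow> L, \<beta> \<leftarrow> L']"
  have "u * v = (\<Sum>\<gamma>\<leftarrow>M. monomial_value m x \<gamma>)"
    unfolding L(3) L'(3) M_def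
    by (induction L) (simp_all add: monomial_value_add sum_list_const_mult distrib_right o_def)
  moreover have "M \<noteq> []" using L(1) L'(1) by (simp add: M_def)
  moreover have "\<forall>\<gamma>\<in>set M. \<forall>i. i \<notin> {1..m} \<longrightarrow> \<gamma> i = 0"
    using L(2) L'(2) by (simp add: M_def)
  ultimately show ?thesis
    unfolding positive_poly_value_def by blast
qed

lemma of_nat_mem_subfield: "is_subfield K \<Longrightarrow> of_nat n \<in> K"
  by (induction n) (auto simp: is_subfield_def)

lemma positive_poly_value_nonzero:
  fixes x :: "nat \<Rightarrow> 'a::field_char_0"
  assumes indep: "alg_indep K m x" and K: "is_subfield K \<or> K = \<int>"
    and v: "positive_poly_value m x v"
  shows "v \<noteq> 0"
proof
  assume "v = 0"
  obtain L where L: "L \<noteq> []" "\<forall>\<alpha>\<in>set L. \<forall>i. i \<notin> {1..m} \<longrightarrow> \<alpha> i = 0"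
    "v = (\<Sum>\<alpha>\<leftarrow>L. monomial_value m x \<alpha>)"
    using v unfolding positive_poly_value_def by blast
  have "(\<Sum>\<alpha>\<in>set L. of_nat (count_list L \<alpha>) * (\<Prod>i\<in>{1..m}. x i ^ \<alpha> i)) = 0"
    using \<open>v = 0\<close> L(3) by (simp add: sum_list_map_eq_sum_count_of_nat monomial_value_def)
  moreover have "\<forall>\<alpha>\<in>set L. (of_nat (count_list L \<alpha>) :: 'a) \<in> K"
    using K of_nat_mem_subfield Ints_of_nat by blast
  ultimately have "\<forall>\<alpha>\<in>set L. (of_nat (count_list L \<alpha>) :: 'a) = 0"
    using indep[unfolded alg_indep_def, rule_format, of "set L" "\<lambda>\<alpha>. of_nat (count_list L \<alpha>)"] L(2)
    by blast
  then show False
    using L(1) by (simp add: count_list_0_iff)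
qed

inductive_set subtraction_free :: "nat \<Rightarrow> (nat \<Rightarrow> 'a::field) \<Rightarrow> 'a set" for m x where
  var: "i \<in> {1..m} \<Longrightarrow> x i \<in> subtraction_free m x"
| one: "1 \<in> subtraction_free m x"
| add: "u \<in> subtraction_free m x \<Longrightarrow> v \<in> subtraction_free m x \<Longrightarrow> u + v \<in> subtraction_free m x"
| mult: "u \<in> subtraction_free m x \<Longrightarrow> v \<in> subtraction_free m x \<Longrightarrow> u * v \<in> subtraction_free m x"
| inverse: "u \<in> subtraction_free m x \<Longrightarrow> inverse u \<in> subtraction_free m x"

lemma subtraction_free_quotient:
  fixes x :: "nat \<Rightarrow> 'a::field_char_0"
  assumes indep: "alg_indep K m x" and K: "is_subfield K \<or> K = \<int>"
  shows "u \<in> subtraction_free m x \<Longrightarrow>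
    \<exists>p q. positive_poly_value m x p \<and> positive_poly_value m x q \<and> u = p / q"
proof (induction rule: subtraction_free.induct)
  case (var i)
  have "x i = x i / 1" by simp
  then show ?case using positive_poly_value_var[OF var] positive_poly_value_one by blast
next
  case one
  have "(1::'a) = 1 / 1" by simp
  then show ?case using positive_poly_value_one by blast
next
  case (add u v)
  then obtain p q p' q' where pq: "positive_poly_value m x p" "positive_poly_value m x q" "u = p / q"
    "positive_poly_value m x p'" "positive_poly_value m x q'" "v = p' / q'"
    by blast
  have "q \<noteq> 0" "q' \<noteq> 0" using pq(2,5) positive_poly_value_nonzero[OF indep K] by auto
  then have "u + v = (p * q' + p' * q) / (q * q')" using pq(3,6) by (simp add: add_frac_eq)
  moreover have "positive_poly_value m x (p * q' + p' * q)" "positive_poly_value m x (q * q')"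
    using pq by (simp_all add: positive_poly_value_add positive_poly_value_mult)
  ultimately show ?case by blast
next
  case (mult u v)
  then obtain p q p' q' where pq: "positive_poly_value m x p" "positive_poly_value m x q" "u = p / q"
    "positive_poly_value m x p'" "positive_poly_value m x q'" "v = p' / q'"
    by blast
  then have "u * v = (p * p') / (q * q')" by simp
  moreover have "positive_poly_value m x (p * p')" "positive_poly_value m x (q * q')"
    using pq by (simp_all add: positive_poly_value_mult)
  ultimately show ?case by blast
next
  case (inverse u)
  then obtain p q where "positive_poly_value m x p" "positive_poly_value m x q" "u = p / q"
    by blast
  then show ?case by auto
qed

lemma subtraction_free_nonzero:
  fixes x :: "nat \<Rightarrow> 'a::field_char_0"
  assumes "alg_indep K m x" "is_subfield K \<or> K = \<int>" "u \<in> subtraction_free m x"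
  shows "u \<noteq> 0"
  using subtraction_free_quotient[OF assms] positive_poly_value_nonzero[OF assms(1,2)] by fastforce

lemma subtraction_free_power: "u \<in> subtraction_free m x \<Longrightarrow> u ^ e \<in> subtraction_free m x"
  by (induction e) (auto intro: subtraction_free.intros)

lemma subtraction_free_prod:
  "finite A \<Longrightarrow> (\<And>a. a \<in> A \<Longrightarrow> f a \<in> subtraction_free m x) \<Longrightarrow> prod f A \<in> subtraction_free m x"
  by (induction A rule: finite_induct) (auto intro: subtraction_free.intros)

lemma mut_subtraction_free:
  assumes "\<forall>q\<in>{1..m}. fst s q \<in> subtraction_free m x"
  shows "\<forall>q\<in>{1..m}. fst (mut m k s) q \<in> subtraction_free m x"
proof -
  obtain y C where s: "s = (y, C)" by (cases s)
  have y: "y q \<in> subtraction_free m x" if "q \<in> {1..m}" for q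
    using assms that s by simp
  have "inverse (y k) *
        ((\<Prod>i\<in>{1..m}. if C i k > 0 then y i ^ nat (C i k) else 1) +
         (\<Prod>i\<in>{1..m}. if C i k < 0 then y i ^ nat (- C i k) else 1)) \<in> subtraction_free m x"
    if "k \<in> {1..m}"
    using that by (intro subtraction_free.intros subtraction_free_prod)
      (auto intro!: y subtraction_free_power subtraction_free.one)
  then show ?thesis by (auto simp: s mut_def Let_def y)
qed

lemma fold_mut_subtraction_free:
  "\<forall>q\<in>{1..m}. fst s q \<in> subtraction_free m x \<Longrightarrow>
   \<forall>q\<in>{1..m}. fst (fold (mut m) ks s) q \<in> subtraction_free m x"
  by (induction ks arbitrary: s) (simp_all add: mut_subtraction_free)

lemma seed_seq_subtraction_free:
  "\<forall>q\<in>{1..n + 1}. fst (seed_seq n x i) q \<in> subtraction_free (n + 1) x"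
  by (induction i) (simp_all add: fold_mut_subtraction_free subtraction_free.var)

definition sign_of :: "bool \<Rightarrow> int" where
  "sign_of b = (if b then 1 else -1)"

definition tri_mat :: "nat \<Rightarrow> (nat \<Rightarrow> bool) \<Rightarrow> nat \<Rightarrow> nat \<Rightarrow> int" where
  "tri_mat n s = (\<lambda>i j. if 1 \<le> i \<and> i \<le> n + 1 \<and> 1 \<le> j \<and> j \<le> n then
      (if i = j + 1 then sign_of (s j) else if j = i + 1 then - sign_of (s i) else 0) else 0)"

lemma Bmat_eq_tri_mat: "Bmat n = tri_mat n (\<lambda>c. c \<le> n)"
  unfolding Bmat_def tri_mat_def sign_of_def by (intro ext) auto

lemma tri_mat_cong: "(\<And>c. 1 \<le> c \<Longrightarrow> s c = s' c) \<Longrightarrow> tri_mat n s = tri_mat n s'"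
  unfolding tri_mat_def by (intro ext) auto

lemma abs_mult_add_mult_abs_eq_0: "(a::int) * b \<le> 0 \<Longrightarrow> \<bar>a\<bar> * b + a * \<bar>b\<bar> = 0"
  by (auto simp: abs_if mult_le_0_iff)

lemma mut_mat_tri_mat:
  assumes k: "1 \<le> k" "k \<le> n" and alt: "k = 1 \<or> s (k - 1) \<noteq> s k"
  shows "mut_mat k (tri_mat n s) = tri_mat n (s(k - 1 := \<not> s (k - 1), k := \<not> s k))"
    (is "_ = tri_mat n ?s'")
proof (intro ext)
  fix i j
  have flip: "tri_mat n ?s' i j = - tri_mat n s i j" if "i = k \<or> j = k"
    using that k unfolding tri_mat_def sign_of_def by auto
  have keep: "tri_mat n ?s' i j = tri_mat n s i j" if "i \<noteq> k" "j \<noteq> k"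
    using that unfolding tri_mat_def by auto
  \<comment> \<open>the correction term vanishes; for \<open>{i, j} = {k - 1, k + 1}\<close> this needs the alternation\<close>
  have "tri_mat n s i k * tri_mat n s k j \<le> 0" if "i \<noteq> k" "j \<noteq> k"
    using that k alt unfolding tri_mat_def sign_of_def by auto
  then show "mut_mat k (tri_mat n s) i j = tri_mat n ?s' i j"
    unfolding mut_mat_def using flip keep by (simp add: abs_mult_add_mult_abs_eq_0)
qed

lemma prod_neighbours:
  fixes k n :: nat
  assumes k: "1 \<le> k" "k \<le> n"
    and f: "\<And>i. i \<in> {1..n + 1} \<Longrightarrow> i \<noteq> k + 1 \<Longrightarrow> i + 1 \<noteq> k \<Longrightarrow> f i = 1"
  shows "prod f {1..n + 1} = f (k + 1) * (if 2 \<le> k then f (k - 1) else 1)"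
proof -
  have "prod f {1..n + 1} = prod f (insert (k + 1) {i. 1 \<le> i \<and> i + 1 = k})"
  proof (rule prod.mono_neutral_right)
    show "insert (k + 1) {i. 1 \<le> i \<and> i + 1 = k} \<subseteq> {1..n + 1}" using k by auto
    show "\<forall>i\<in>{1..n + 1} - insert (k + 1) {i. 1 \<le> i \<and> i + 1 = k}. f i = 1" using f by auto
  qed simp
  moreover have "{i. 1 \<le> i \<and> i + 1 = k} = (if 2 \<le> k then {k - 1} else {})"
    by auto
  ultimately show ?thesis by simp
qed

lemma mut_tri_mat_exchange:
  fixes y :: "nat \<Rightarrow> 'a::field"
  assumes k: "1 \<le> k" "k \<le> n"
  shows "fst (mut (n + 1) k (y, tri_mat n s)) k = inverse (y k) *
      ((if s k then y (k + 1) else 1) * (if 2 \<le> k \<and> \<not> s (k - 1) then y (k - 1) else 1)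
     + (if s k then 1 else y (k + 1)) * (if 2 \<le> k \<and> s (k - 1) then y (k - 1) else 1))"
proof -
  define pos neg where
    "pos i = (if tri_mat n s i k > 0 then y i ^ nat (tri_mat n s i k) else 1)" and
    "neg i = (if tri_mat n s i k < 0 then y i ^ nat (- tri_mat n s i k) else 1)" for i
  have below: "tri_mat n s (k + 1) k = sign_of (s k)"
    and above: "2 \<le> k \<Longrightarrow> tri_mat n s (k - 1) k = - sign_of (s (k - 1))"
    and other: "i \<noteq> k + 1 \<Longrightarrow> i + 1 \<noteq> k \<Longrightarrow> tri_mat n s i k = 0" for i
    using k unfolding tri_mat_def by auto
  have "pos (k + 1) = (if s k then y (k + 1) else 1)" "neg (k + 1) = (if s k then 1 else y (k + 1))"
    unfolding pos_def neg_def below sign_of_def by simp_all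
  moreover have "pos (k - 1) = (if \<not> s (k - 1) then y (k - 1) else 1)"
    "neg (k - 1) = (if s (k - 1) then y (k - 1) else 1)" if "2 \<le> k"
    unfolding pos_def neg_def above[OF that] sign_of_def by simp_all
  moreover have "pos i = 1" "neg i = 1" if "i \<noteq> k + 1" "i + 1 \<noteq> k" for i
    unfolding pos_def neg_def other[OF that] by simp_all
  moreover have "fst (mut (n + 1) k (y, tri_mat n s)) k
      = inverse (y k) * (prod pos {1..n + 1} + prod neg {1..n + 1})"
    by (simp add: mut_def Let_def pos_def neg_def)
  ultimately show ?thesis
    using prod_neighbours[OF k, of pos] prod_neighbours[OF k, of neg] by (cases "2 \<le> k") auto
qed

definition sweep_signs :: "nat \<Rightarrow> nat \<Rightarrow> nat \<Rightarrow> bool" where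
  "sweep_signs N p c \<longleftrightarrow> c \<le> N \<and> \<not> (1 \<le> p \<and> c = p)"

lemma snd_fold_mut: "snd (fold (mut m) ks s) = fold mut_mat ks (snd s)"
  by (induction ks arbitrary: s) (simp_all add: mut_def Let_def)

lemma fold_mut_mat_sweep:
  assumes "N \<le> n"
  shows "p \<le> N \<Longrightarrow>
    fold mut_mat [1..<p + 1] (tri_mat n (\<lambda>c. c \<le> N)) = tri_mat n (sweep_signs N p)"
proof (induction p)
  case 0
  show ?case by (auto intro: tri_mat_cong simp: sweep_signs_def)
next
  case (Suc p)
  have "fold mut_mat [1..<Suc p + 1] (tri_mat n (\<lambda>c. c \<le> N))
      = mut_mat (p + 1) (tri_mat n (sweep_signs N p))"
    using Suc by simp
  also have "\<dots> = tri_mat n ((sweep_signs N p)(p + 1 - 1 := \<not> sweep_signs N p (p + 1 - 1),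
      p + 1 := \<not> sweep_signs N p (p + 1)))"
    using Suc.prems assms by (intro mut_mat_tri_mat) (auto simp: sweep_signs_def)
  also have "\<dots> = tri_mat n (sweep_signs N (Suc p))"
    using Suc.prems by (intro tri_mat_cong) (auto simp: sweep_signs_def)
  finally show ?case .
qed

lemma snd_seed_seq: "snd (seed_seq n x i) = tri_mat n (\<lambda>c. c \<le> n - i)"
proof (induction i)
  case 0
  show ?case by (simp add: Bmat_eq_tri_mat)
next
  case (Suc i)
  have "snd (seed_seq n x (Suc i))
      = fold mut_mat [1..<(n - i) + 1] (tri_mat n (\<lambda>c. c \<le> n - i))"
    using Suc.IH by (simp add: snd_fold_mut Suc_diff_le)
  also have "\<dots> = tri_mat n (sweep_signs (n - i) (n - i))"
    by (simp only: fold_mut_mat_sweep)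
  also have "\<dots> = tri_mat n (\<lambda>c. c \<le> n - Suc i)"
    by (intro tri_mat_cong) (auto simp: sweep_signs_def)
  finally show ?case .
qed

lemma fst_mut_other: "q \<noteq> k \<Longrightarrow> fst (mut m k s) q = fst s q"
  by (simp add: mut_def Let_def)

lemma fold_mut_sweep_values:
  fixes y :: "nat \<Rightarrow> 'a::field"
  assumes N: "N \<le> n" and nz: "\<forall>q\<in>{1..N}. y q \<noteq> 0"
  defines "z \<equiv> \<lambda>p. fst (fold (mut (n + 1)) [1..<p + 1] (y, tri_mat n (\<lambda>c. c \<le> N)))"
  shows "p \<le> N \<Longrightarrow> (\<forall>q>p. z p q = y q)
    \<and> (\<forall>q\<in>{1..p}. z p q * y q = (if q = 1 then 1 else z p (q - 1)) * y (q + 1) + 1)"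
proof (induction p)
  case 0
  show ?case by (simp add: z_def)
next
  case (Suc p)
  then have IH: "\<forall>q>p. z p q = y q"
    "\<forall>q\<in>{1..p}. z p q * y q = (if q = 1 then 1 else z p (q - 1)) * y (q + 1) + 1"
    by simp_all
  have "snd (fold (mut (n + 1)) [1..<p + 1] (y, tri_mat n (\<lambda>c. c \<le> N)))
      = tri_mat n (sweep_signs N p)"
    unfolding snd_fold_mut snd_conv using Suc.prems by (intro fold_mut_mat_sweep[OF N]) simp
  then have seed: "fold (mut (n + 1)) [1..<p + 1] (y, tri_mat n (\<lambda>c. c \<le> N))
      = (z p, tri_mat n (sweep_signs N p))"
    unfolding z_def by (metis prod.collapse)
  then have step: "z (Suc p) = fst (mut (n + 1) (p + 1) (z p, tri_mat n (sweep_signs N p)))"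
    by (simp add: z_def)
  have new: "z (Suc p) (p + 1) * y (p + 1) = (if p + 1 = 1 then 1 else z p p) * y (p + 2) + 1"
  proof -
    have "z (Suc p) (p + 1) = inverse (z p (p + 1)) *
        (z p (p + 2) * (if 2 \<le> p + 1 then z p p else 1) + 1)"
      unfolding step using Suc.prems N
      by (subst mut_tri_mat_exchange) (auto simp: sweep_signs_def numeral_2_eq_2)
    moreover have "z p (p + 1) = y (p + 1)" "z p (p + 2) = y (p + 2)" using IH(1) by auto
    moreover have "y (p + 1) \<noteq> 0" using nz Suc.prems by auto
    ultimately show ?thesis by (auto simp: field_simps)
  qed
  have old: "z (Suc p) q = z p q" if "q \<noteq> p + 1" for q
    unfolding step using that by (simp add: fst_mut_other)
  show ?case
  proof (intro conjI ballI allI impI)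
    show "z (Suc p) q = y q" if "Suc p < q" for q using that old IH(1) by simp
    show "z (Suc p) q * y q = (if q = 1 then 1 else z (Suc p) (q - 1)) * y (q + 1) + 1"
      if "q \<in> {1..Suc p}" for q
      using that new old IH(2) by (cases "q = p + 1") auto
  qed
qed

lemma xv_exchange:
  assumes nz: "\<And>q. q \<le> n + 1 \<Longrightarrow> xv n x i q \<noteq> 0" and q: "1 \<le> q" "q \<le> n - i"
  shows "xv n x (Suc i) q * xv n x i q = xv n x (Suc i) (q - 1) * xv n x i (q + 1) + 1"
proof -
  define y where "y = fst (seed_seq n x i)"
  have seed: "seed_seq n x i = (y, tri_mat n (\<lambda>c. c \<le> n - i))"
    unfolding y_def using snd_seed_seq by (metis prod.collapse)
  have "seed_seq n x (Suc i)
      = fold (mut (n + 1)) [1..<(n - i) + 1] (y, tri_mat n (\<lambda>c. c \<le> n - i))"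
    by (simp add: seed Suc_diff_le)
  moreover have "\<forall>q\<in>{1..n - i}. y q \<noteq> 0"
  proof
    fix q assume "q \<in> {1..n - i}"
    then have "1 \<le> q" "q \<le> n + 1" by auto
    then show "y q \<noteq> 0" using nz[of q] by (simp add: xv_def y_def)
  qed
  ultimately have "fst (seed_seq n x (Suc i)) q * y q
      = (if q = 1 then 1 else fst (seed_seq n x (Suc i)) (q - 1)) * y (q + 1) + 1"
    using fold_mut_sweep_values[of "n - i" n y "n - i"] q by simp
  then show ?thesis using q unfolding xv_def y_def by simp
qed

lemma xv_ratio_shift:
  assumes nz: "\<And>i q. q \<le> n + 1 \<Longrightarrow> xv n x i q \<noteq> 0" and k: "1 \<le> k" "k + 1 \<le> n - i"
  shows "(xv n x (Suc i) (k - 1) + xv n x (Suc i) (k + 1)) / xv n x (Suc i) k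
       = (xv n x i k + xv n x i (k + 2)) / xv n x i (k + 1)"
proof -
  have "xv n x (Suc i) k * xv n x i k = xv n x (Suc i) (k - 1) * xv n x i (k + 1) + 1"
    and "xv n x (Suc i) (k + 1) * xv n x i (k + 1) = xv n x (Suc i) k * xv n x i (k + 2) + 1"
    using xv_exchange[of n x i k] xv_exchange[of n x i "k + 1"] nz k by simp_all
  then have "(xv n x (Suc i) (k - 1) + xv n x (Suc i) (k + 1)) * xv n x i (k + 1)
      = (xv n x i k + xv n x i (k + 2)) * xv n x (Suc i) k"
    by (simp add: algebra_simps)
  moreover have "xv n x (Suc i) k \<noteq> 0" "xv n x i (k + 1) \<noteq> 0" using nz k by auto
  ultimately show ?thesis by (simp add: frac_eq_eq)
qed

lemma xv_ratio_shift_iter: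
  assumes nz: "\<And>i q. q \<le> n + 1 \<Longrightarrow> xv n x i q \<noteq> 0" and k: "1 \<le> k" "k \<le> n - i"
  shows "j \<le> i \<Longrightarrow> (xv n x i (k - 1) + xv n x i (k + 1)) / xv n x i k
    = (xv n x (i - j) (k - 1 + j) + xv n x (i - j) (k + 1 + j)) / xv n x (i - j) (k + j)"
proof (induction j)
  case (Suc j)
  have "Suc (i - Suc j) = i - j" "k + j - 1 = k - 1 + j" "k + j + 2 = k + 1 + Suc j"
    using Suc.prems k by auto
  then have "(xv n x (i - j) (k - 1 + j) + xv n x (i - j) (k + 1 + j)) / xv n x (i - j) (k + j)
      = (xv n x (i - Suc j) (k - 1 + Suc j) + xv n x (i - Suc j) (k + 1 + Suc j))
        / xv n x (i - Suc j) (k + Suc j)"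
    using xv_ratio_shift[OF nz, of "k + j" "i - Suc j"] Suc.prems k by simp
  then show ?case using Suc by simp
qed simp

lemma xv_nonzero:
  fixes x :: "nat \<Rightarrow> 'a::field_char_0"
  assumes "alg_indep K (n + 1) x" "is_subfield K \<or> K = \<int>" "q \<le> n + 1"
  shows "xv n x i q \<noteq> 0"
  using assms seed_seq_subtraction_free[of n x i] subtraction_free_nonzero[OF assms(1,2)]
  by (auto simp: xv_def)

theorem lemma7p1:
  fixes K :: "'a::field_char_0 set" and x :: "nat \<Rightarrow> 'a" and n i k j :: nat
  assumes "n \<ge> 1"
    and "is_subfield K \<or> K = \<int>"
    and "alg_indep K (n + 1) x"
    and "i \<le> (n + 1) - 2" and "1 \<le> k" and "k \<le> (n + 1) - 1 - i" and "j \<le> i"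
  shows "fst (mut (n + 1) k (seed_seq n x i)) k
           = (xv n x i (k - 1) + xv n x i (k + 1)) / xv n x i k
       \<and> (xv n x i (k - 1) + xv n x i (k + 1)) / xv n x i k
           = (xv n x (i - j) (k - 1 + j) + xv n x (i - j) (k + 1 + j)) / xv n x (i - j) (k + j)"
proof
  have k: "1 \<le> k" "k \<le> n - i" using assms(5,6) by auto
  define y where "y = fst (seed_seq n x i)"
  have seed: "seed_seq n x i = (y, tri_mat n (\<lambda>c. c \<le> n - i))"
    unfolding y_def using snd_seed_seq by (metis prod.collapse)
  have "fst (mut (n + 1) k (seed_seq n x i)) k
      = inverse (y k) * (y (k + 1) + (if 2 \<le> k then y (k - 1) else 1))"
    unfolding seed mut_tri_mat_exchange[OF k(1) order_trans[OF k(2) diff_le_self]] using k by auto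
  then show "fst (mut (n + 1) k (seed_seq n x i)) k
      = (xv n x i (k - 1) + xv n x i (k + 1)) / xv n x i k"
    using k by (simp add: xv_def y_def divide_inverse mult.commute add.commute)
  show "(xv n x i (k - 1) + xv n x i (k + 1)) / xv n x i k
      = (xv n x (i - j) (k - 1 + j) + xv n x (i - j) (k + 1 + j)) / xv n x (i - j) (k + j)"
    using xv_ratio_shift_iter[OF xv_nonzero[OF assms(3,2)] k assms(7)] .
qed

end
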